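(* For the revision operator $\mathsf{OGI}$: (a) postulate $(P^*1)$ fails in general: there exist $W$, a distance $d$, an observation function $O$, a belief state $b$ and a satisfiable $\alpha$ (which is weakly observable) such that $b\,\mathsf{OGI}\,\alpha$ is not a belief state; (b) if $\alpha$ is strongly observable, then for every belief state $b$, $b\,\mathsf{OGI}\,\alpha$ is a belief state if and only if $\alpha$ is satisfiable.
   Context: $W$ is the finite set of worlds of a finite propositional language $L$; $\|\alpha\|$ the set of $\alpha$-worlds. A belief state is a probability distribution $b$ on $W$. $d$ is a distance on worlds satisfying $d(w,w)<d(v,w)$ for all $v\neq w$. $\mathit{Min}(\alpha,w,d):=\{w'\in\|\alpha\|:\forall w''\in\|\alpha\|,\ d(w',w)\le d(w'',w)\}$. Generalized imaging: $(b\,\mathsf{GI}\,\alpha)(w)=0$ if $w\notin\|\alpha\|$, else $(b\,\mathsf{GI}\,\alpha)(w)=\sum_{w'\in W:\,w\in\mathit{Min}(\alpha,w',d)}b(w')/|\mathit{Min}(\alpha,w',d)|$. With an observation function $O:L\times W\to[0,1]$, $(b\,\mathsf{OGI}\,\alpha)(w)=\frac{O(\alpha,w)(b\,\mathsf{GI}\,\alpha)(w)}{\sum_{w'}O(\alpha,w')(b\,\mathsf{GI}\,\alpha)(w')}$, which is a belief state iff the denominator is positive and undefined otherwise. $\alpha$ is weakly observable iff some $w\models\alpha$ has $O(\alpha,w)>0$; strongly observable iff $O(\alpha,w)>0$ for all $w\models\alpha$. *)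

theory Defs
  imports Complex_Main
begin

datatype 'a form =
    Atom 'a | Top | Bot | Neg "'a form" | Conj "'a form" "'a form"
  | Disj "'a form" "'a form" | Imp "'a form" "'a form"

fun sat :: "('a \<Rightarrow> bool) \<Rightarrow> 'a form \<Rightarrow> bool" where
  "sat w (Atom p) = w p"
| "sat w Top = True"
| "sat w Bot = False"
| "sat w (Neg f) = (\<not> sat w f)"
| "sat w (Conj f g) = (sat w f \<and> sat w g)"
| "sat w (Disj f g) = (sat w f \<or> sat w g)"
| "sat w (Imp f g) = (sat w f \<longrightarrow> sat w g)"

definition mods :: "'a form \<Rightarrow> ('a \<Rightarrow> bool) set" where
  "mods \<alpha> = {w. sat w \<alpha>}"

definition satisfiable :: "'a form \<Rightarrow> bool" where
  "satisfiable \<alpha> \<longleftrightarrow> mods \<alpha> \<noteq> {}"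

definition belief_state :: "(('a::finite \<Rightarrow> bool) \<Rightarrow> real) \<Rightarrow> bool" where
  "belief_state b \<longleftrightarrow> (\<forall>w. 0 \<le> b w) \<and> (\<Sum>w\<in>UNIV. b w) = 1"

definition is_distance :: "(('a \<Rightarrow> bool) \<Rightarrow> ('a \<Rightarrow> bool) \<Rightarrow> real) \<Rightarrow> bool" where
  "is_distance d \<longleftrightarrow> (\<forall>v w. v \<noteq> w \<longrightarrow> d w w < d v w)"

definition is_obs_fun :: "('a form \<Rightarrow> ('a \<Rightarrow> bool) \<Rightarrow> real) \<Rightarrow> bool" where
  "is_obs_fun Ob \<longleftrightarrow> (\<forall>\<alpha> w. 0 \<le> Ob \<alpha> w \<and> Ob \<alpha> w \<le> 1)"

definition Min_set :: "'a form \<Rightarrow> ('a \<Rightarrow> bool) \<Rightarrow> (('a \<Rightarrow> bool) \<Rightarrow> ('a \<Rightarrow> bool) \<Rightarrow> real)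
    \<Rightarrow> ('a \<Rightarrow> bool) set" where
  "Min_set \<alpha> w d = {w' \<in> mods \<alpha>. \<forall>w'' \<in> mods \<alpha>. d w' w \<le> d w'' w}"

definition GI :: "(('a \<Rightarrow> bool) \<Rightarrow> ('a \<Rightarrow> bool) \<Rightarrow> real) \<Rightarrow> (('a::finite \<Rightarrow> bool) \<Rightarrow> real)
    \<Rightarrow> 'a form \<Rightarrow> ('a \<Rightarrow> bool) \<Rightarrow> real" where
  "GI d b \<alpha> w = (if w \<notin> mods \<alpha> then 0
     else (\<Sum>w'\<in>{w'. w \<in> Min_set \<alpha> w' d}. b w' / real (card (Min_set \<alpha> w' d))))"

definition OGI :: "(('a \<Rightarrow> bool) \<Rightarrow> ('a \<Rightarrow> bool) \<Rightarrow> real) \<Rightarrow> ('a form \<Rightarrow> ('a \<Rightarrow> bool) \<Rightarrow> real)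
    \<Rightarrow> (('a::finite \<Rightarrow> bool) \<Rightarrow> real) \<Rightarrow> 'a form \<Rightarrow> (('a \<Rightarrow> bool) \<Rightarrow> real) option" where
  "OGI d Ob b \<alpha> =
    (let D = (\<Sum>w'\<in>UNIV. Ob \<alpha> w' * GI d b \<alpha> w')
     in if D > 0 then Some (\<lambda>w. Ob \<alpha> w * GI d b \<alpha> w / D) else None)"

definition OGI_is_belief_state :: "(('a \<Rightarrow> bool) \<Rightarrow> ('a \<Rightarrow> bool) \<Rightarrow> real) \<Rightarrow> ('a form \<Rightarrow> ('a \<Rightarrow> bool) \<Rightarrow> real)
    \<Rightarrow> (('a::finite \<Rightarrow> bool) \<Rightarrow> real) \<Rightarrow> 'a form \<Rightarrow> bool" where
  "OGI_is_belief_state d Ob b \<alpha> \<longleftrightarrow> (\<exists>b'. OGI d Ob b \<alpha> = Some b' \<and> belief_state b')"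

definition weakly_observable :: "('a form \<Rightarrow> ('a \<Rightarrow> bool) \<Rightarrow> real) \<Rightarrow> 'a form \<Rightarrow> bool" where
  "weakly_observable Ob \<alpha> \<longleftrightarrow> (\<exists>w. sat w \<alpha> \<and> Ob \<alpha> w > 0)"

definition strongly_observable :: "('a form \<Rightarrow> ('a \<Rightarrow> bool) \<Rightarrow> real) \<Rightarrow> 'a form \<Rightarrow> bool" where
  "strongly_observable Ob \<alpha> \<longleftrightarrow> (\<forall>w. sat w \<alpha> \<longrightarrow> Ob \<alpha> w > 0)"

end

theory Submission
  imports Defs
begin

text \<open>Generalized imaging moves the mass of every world onto its nearest \<open>\<alpha>\<close>-worlds, so for
satisfiable \<open>\<alpha>\<close> it maps a belief state to a belief state supported on \<open>\<alpha>\<close>; for unsatisfiable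
\<open>\<alpha>\<close> it is identically zero. Hence the normaliser of \<open>OGI\<close> is positive as soon as some
\<open>\<alpha>\<close>-world carrying imaged mass is observed with positive probability, which strong
observability guarantees, and it vanishes when \<open>\<alpha>\<close> is unsatisfiable. A merely weakly
observable \<open>\<alpha>\<close> fails: with \<open>\<alpha> = Top\<close> imaging is the identity, and an observation function that
is positive only outside the support of \<open>b\<close> makes the normaliser zero.\<close>

lemma Min_set_nonempty:
  fixes \<alpha> :: "'a::finite form"
  assumes "satisfiable \<alpha>"
  shows "Min_set \<alpha> w d \<noteq> {}"
proof -
  have "finite ((\<lambda>x. d x w) ` mods \<alpha>)" "(\<lambda>x. d x w) ` mods \<alpha> \<noteq> {}"
    using assms by (auto simp: satisfiable_def)
  then have "Min ((\<lambda>x. d x w) ` mods \<alpha>) \<in> (\<lambda>x. d x w) ` mods \<alpha>"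
    by (rule Min_in)
  then obtain x where "x \<in> mods \<alpha>" "d x w = Min ((\<lambda>x. d x w) ` mods \<alpha>)"
    by auto
  then have "x \<in> Min_set \<alpha> w d"
    unfolding Min_set_def by auto
  then show ?thesis by blast
qed

lemma Min_set_subset_mods: "Min_set \<alpha> w d \<subseteq> mods \<alpha>"
  unfolding Min_set_def by blast

lemma GI_eq_sum_UNIV:
  "GI d b \<alpha> w =
    (\<Sum>w'\<in>UNIV. if w \<in> Min_set \<alpha> w' d then b w' / real (card (Min_set \<alpha> w' d)) else 0)"
proof (cases "w \<in> mods \<alpha>")
  case True
  then show ?thesis
    unfolding GI_def by (simp add: sum.If_cases Int_def)
next
  case False
  then have "w \<notin> Min_set \<alpha> w' d" for w'
    using Min_set_subset_mods by blast
  with False show ?thesis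
    unfolding GI_def by simp
qed

lemma GI_nonneg:
  assumes "\<And>w. 0 \<le> b w"
  shows "0 \<le> GI d b \<alpha> w"
  unfolding GI_eq_sum_UNIV using assms by (intro sum_nonneg) auto

lemma OGI_weight_nonneg:
  assumes "is_obs_fun Ob" and "\<And>w. 0 \<le> b w"
  shows "0 \<le> Ob \<alpha> w * GI d b \<alpha> w"
proof -
  have "0 \<le> GI d b \<alpha> w"
    by (rule GI_nonneg) (rule assms(2))
  with assms(1) show ?thesis
    unfolding is_obs_fun_def by simp
qed

lemma GI_pos_imp_mods: "0 < GI d b \<alpha> w \<Longrightarrow> w \<in> mods \<alpha>"
  unfolding GI_def by (auto split: if_splits)

lemma GI_unsatisfiable: "\<not> satisfiable \<alpha> \<Longrightarrow> GI d b \<alpha> w = 0"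
  unfolding GI_def satisfiable_def by simp

lemma sum_GI:
  assumes "satisfiable \<alpha>"
  shows "(\<Sum>w\<in>UNIV. GI d b \<alpha> w) = (\<Sum>w\<in>UNIV. b w)"
proof -
  have "(\<Sum>w\<in>UNIV. GI d b \<alpha> w) =
      (\<Sum>w'\<in>UNIV. \<Sum>w\<in>UNIV. if w \<in> Min_set \<alpha> w' d then b w' / real (card (Min_set \<alpha> w' d)) else 0)"
    unfolding GI_eq_sum_UNIV by (rule sum.swap)
  also have "\<dots> = (\<Sum>w'\<in>UNIV. b w')"
  proof (rule sum.cong [OF refl])
    fix w'
    have "Min_set \<alpha> w' d \<noteq> {}"
      using Min_set_nonempty [OF assms] .
    then show "(\<Sum>w\<in>UNIV. if w \<in> Min_set \<alpha> w' d
        then b w' / real (card (Min_set \<alpha> w' d)) else 0) = b w'"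
      by (simp add: sum.If_cases)
  qed
  finally show ?thesis .
qed

lemma belief_state_normalise:
  fixes f :: "('a::finite \<Rightarrow> bool) \<Rightarrow> real"
  assumes "\<And>w. 0 \<le> f w" and "0 < (\<Sum>w\<in>UNIV. f w)"
  shows "belief_state (\<lambda>w. f w / (\<Sum>w\<in>UNIV. f w))"
  using assms unfolding belief_state_def by (simp add: sum_divide_distrib [symmetric])

lemma OGI_is_belief_state_iff:
  assumes "is_obs_fun Ob" and "\<And>w. 0 \<le> b w"
  shows "OGI_is_belief_state d Ob b \<alpha> \<longleftrightarrow> 0 < (\<Sum>w\<in>UNIV. Ob \<alpha> w * GI d b \<alpha> w)"
  using belief_state_normalise [of "\<lambda>w. Ob \<alpha> w * GI d b \<alpha> w"] OGI_weight_nonneg [OF assms]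
  unfolding OGI_is_belief_state_def OGI_def Let_def by auto

lemma exists_GI_pos:
  assumes "belief_state b" and "satisfiable \<alpha>"
  obtains w where "0 < GI d b \<alpha> w"
proof -
  have "(\<Sum>w\<in>UNIV. GI d b \<alpha> w) = 1"
    using assms(1) sum_GI [OF assms(2)] unfolding belief_state_def by simp
  then have "\<not> (\<forall>w. GI d b \<alpha> w \<le> 0)"
    using sum_nonpos [of UNIV "GI d b \<alpha>"] by auto
  then show ?thesis
    using that by (auto simp: not_le)
qed

lemma OGI_is_belief_state_iff_satisfiable:
  assumes "is_obs_fun Ob" and "strongly_observable Ob \<alpha>" and b: "belief_state b"
  shows "OGI_is_belief_state d Ob b \<alpha> \<longleftrightarrow> satisfiable \<alpha>"
proof -
  have b_nonneg: "\<And>w. 0 \<le> b w"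
    using b unfolding belief_state_def by simp
  have "0 < (\<Sum>w\<in>UNIV. Ob \<alpha> w * GI d b \<alpha> w)" if sat: "satisfiable \<alpha>"
  proof -
    obtain w where GI_pos: "0 < GI d b \<alpha> w"
      using exists_GI_pos [OF b sat] .
    then have "0 < Ob \<alpha> w"
      using GI_pos_imp_mods assms(2) unfolding strongly_observable_def mods_def by blast
    with GI_pos show ?thesis
      using OGI_weight_nonneg [OF assms(1) b_nonneg] by (intro sum_pos2 [of UNIV w]) auto
  qed
  then show ?thesis
    using OGI_is_belief_state_iff [OF assms(1) b_nonneg] GI_unsatisfiable by fastforce
qed

lemma OGI_weakly_observable_counterexample:
  "\<exists>(d :: (bool \<Rightarrow> bool) \<Rightarrow> (bool \<Rightarrow> bool) \<Rightarrow> real) Ob b (\<alpha> :: bool form).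
     is_distance d \<and> is_obs_fun Ob \<and> belief_state b \<and> satisfiable \<alpha> \<and>
     weakly_observable Ob \<alpha> \<and> \<not> OGI_is_belief_state d Ob b \<alpha>"
proof -
  define d :: "(bool \<Rightarrow> bool) \<Rightarrow> (bool \<Rightarrow> bool) \<Rightarrow> real"
    where "d = (\<lambda>v w. if v = w then 0 else 1)"
  define Ob :: "bool form \<Rightarrow> (bool \<Rightarrow> bool) \<Rightarrow> real"
    where "Ob = (\<lambda>_ w. if w = (\<lambda>_. False) then 1 else 0)"
  define b :: "(bool \<Rightarrow> bool) \<Rightarrow> real"
    where "b = (\<lambda>w. if w = (\<lambda>_. True) then 1 else 0)"
  have "Min_set Top w d = {w}" for w
    unfolding Min_set_def mods_def d_def by auto
  then have "GI d b Top w = b w" for w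
    unfolding GI_def by (simp add: mods_def)
  moreover have "(\<lambda>_::bool. True) \<noteq> (\<lambda>_. False)"
    by (auto dest: fun_cong)
  ultimately have "Ob Top w * GI d b Top w = 0" for w
    unfolding Ob_def b_def by auto
  then have "(\<Sum>w\<in>UNIV. Ob Top w * GI d b Top w) = 0"
    by (intro sum.neutral) blast
  moreover have "belief_state b"
    unfolding belief_state_def b_def by simp
  moreover have "is_obs_fun Ob"
    unfolding is_obs_fun_def Ob_def by simp
  ultimately have "\<not> OGI_is_belief_state d Ob b Top"
    using OGI_is_belief_state_iff [of Ob b d Top] unfolding belief_state_def by simp
  moreover have "is_distance d"
    unfolding is_distance_def d_def by simp
  moreover have "satisfiable (Top :: bool form)" "weakly_observable Ob Top"
    unfolding satisfiable_def mods_def weakly_observable_def Ob_def by auto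
  ultimately show ?thesis
    using \<open>belief_state b\<close> \<open>is_obs_fun Ob\<close> by blast
qed

theorem proposition8:
  shows "(\<exists>(d :: (bool \<Rightarrow> bool) \<Rightarrow> (bool \<Rightarrow> bool) \<Rightarrow> real) Ob b (\<alpha> :: bool form).
            is_distance d \<and> is_obs_fun Ob \<and> belief_state b \<and> satisfiable \<alpha> \<and>
            weakly_observable Ob \<alpha> \<and> \<not> OGI_is_belief_state d Ob b \<alpha>)
       \<and> (\<forall>(d :: ('a::finite \<Rightarrow> bool) \<Rightarrow> ('a \<Rightarrow> bool) \<Rightarrow> real) Ob (\<alpha> :: 'a form).
            is_distance d \<and> is_obs_fun Ob \<and> strongly_observable Ob \<alpha> \<longrightarrow>
            (\<forall>b. belief_state b \<longrightarrow> (OGI_is_belief_state d Ob b \<alpha> \<longleftrightarrow> satisfiable \<alpha>)))"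
  using OGI_weakly_observable_counterexample OGI_is_belief_state_iff_satisfiable by blast

end
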